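(* Let $T$ be a finite rooted unweighted tree with root $r_T$, height $h_T$ and $L_T$ leaves, and consider the Hydra game on $T$ played by the algorithm $\mathrm{HERC}$. At any time during the game, define $$\Phi = 4\, h_T\, H(\mathrm{rank}(r_T)) + \sum_{w \in T} \eta(w)\,\mathrm{level}(w).$$ Then at any time, $\Phi = O(h_T \cdot (1+\log L_T))$, i.e., there is an absolute constant $C$ such that $\Phi \le C\, h_T (1+\log L_T)$ for every such tree and at every time of the game.
   Context: Hydra game: it is played on a fixed finite rooted unweighted tree $T$ known in advance. Each node is asleep, alive, or dead. Initially the root $r_T$ is alive and all other nodes are asleep. In each step the adversary picks an alive node $w$, makes it dead, and makes all its children alive (so at all times all ancestors of alive nodes are dead and all descendants of alive nodes are asleep). The game ends when all nodes except one are dead. The algorithm must always be at an alive node; if its node is killed, it moves to an alive node $w'$ paying the tree distance $\mathrm{dist}(w,w')$ (length of the shortest path in $T$). $\mathrm{rank}(u)$ is the number of non-dead (alive or asleep) leaves in the subtree rooted at $u$; $\mathrm{level}(u)$ is the height of the subtree rooted at $u$ (leaves have level $0$, so $h_T=\mathrm{level}(r_T)$). $H(n)=\sum_{i=1}^n 1/i$ is the $n$-th harmonic number. Algorithm $\mathrm{HERC}$ maintains a probability distribution $\eta$ on nodes with $\eta(u)=\mathrm{rank}(u)/\mathrm{rank}(r_T)$ if $u$ is alive and $\eta(u)=0$ otherwise (so initially $\eta$ is $1$ at the root). *)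

theory Defs
  imports "HOL-Analysis.Analysis"
begin

datatype tree = Node "tree list"

fun height :: "tree \<Rightarrow> nat" where
  "height (Node ts) = (if ts = [] then 0 else Suc (Max (set (map height ts))))"

primrec subt :: "tree \<Rightarrow> nat list \<Rightarrow> tree option" where
  "subt t [] = Some t"
| "subt t (i # p) = (case t of Node ts \<Rightarrow> if i < length ts then subt (ts ! i) p else None)"

definition nodes :: "tree \<Rightarrow> nat list set" where
  "nodes T = {p. subt T p \<noteq> None}"

definition children :: "tree \<Rightarrow> nat list \<Rightarrow> nat list set" where
  "children T u = {u @ [i] | i. u @ [i] \<in> nodes T}"

definition leaves :: "tree \<Rightarrow> nat list set" where
  "leaves T = {p. subt T p = Some (Node [])}"

definition level :: "tree \<Rightarrow> nat list \<Rightarrow> nat" where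
  "level T u = height (the (subt T u))"

text \<open>A state is a pair (D, A) of the set of dead nodes and the set of alive nodes;
  all other nodes are asleep.\<close>

inductive reachable :: "tree \<Rightarrow> nat list set \<Rightarrow> nat list set \<Rightarrow> bool" for T where
  init: "reachable T {} {[]}"
| step: "reachable T D A \<Longrightarrow> card (nodes T - D) > 1 \<Longrightarrow> w \<in> A \<Longrightarrow>
         reachable T (insert w D) ((A - {w}) \<union> children T w)"

definition rank :: "tree \<Rightarrow> nat list set \<Rightarrow> nat list \<Rightarrow> nat" where
  "rank T D u = card {l \<in> leaves T. (\<exists>q. l = u @ q) \<and> l \<notin> D}"

text \<open>HERC's distribution eta\<close>
definition eta :: "tree \<Rightarrow> nat list set \<Rightarrow> nat list set \<Rightarrow> nat list \<Rightarrow> real" where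
  "eta T D A u = (if u \<in> A then real (rank T D u) / real (rank T D []) else 0)"

definition Phi :: "tree \<Rightarrow> nat list set \<Rightarrow> nat list set \<Rightarrow> real" where
  "Phi T D A = 4 * real (height T) * harm (rank T D [])
      + (\<Sum>w\<in>nodes T. eta T D A w * real (level T w))"

end

theory Submission
  imports Defs
begin

text \<open>Every level is at most the height of the tree, and under HERC the alive nodes form an
  antichain of the tree, so their ranks add up to at most the rank of the root.  Hence
  \<open>\<eta>\<close> has total mass at most 1, the level part of \<open>\<Phi>\<close> is at most \<open>h\<^sub>T\<close>, and
  \<open>H(rank(r\<^sub>T)) \<le> H(L\<^sub>T) \<le> 1 + ln L\<^sub>T\<close> bounds the other part: \<open>\<Phi> \<le> 5 h\<^sub>T (1 + ln L\<^sub>T)\<close>.\<close>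

lemma nodes_Node: "nodes (Node ts) = insert [] (\<Union>i<length ts. (Cons i) ` nodes (ts!i))"
proof -
  have "p \<in> nodes (Node ts) \<longleftrightarrow> p \<in> insert [] (\<Union>i<length ts. (Cons i) ` nodes (ts!i))" for p
    by (cases p) (auto simp: nodes_def)
  then show ?thesis by blast
qed

lemma finite_nodes: "finite (nodes T)"
  by (induction T) (simp add: nodes_Node)

lemma leaves_subset_nodes: "leaves T \<subseteq> nodes T"
  by (auto simp: leaves_def nodes_def)

lemma finite_leaves: "finite (leaves T)"
  using finite_subset[OF leaves_subset_nodes finite_nodes] .

lemma height_subt_le: "subt t p = Some s \<Longrightarrow> height s \<le> height t"
proof (induction p arbitrary: t)
  case Nil
  then show ?case by simp
next
  case (Cons i p)
  obtain ts where t: "t = Node ts" by (cases t)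
  with Cons.prems have i: "i < length ts" and s: "subt (ts!i) p = Some s"
    by (auto split: if_splits)
  have "height s \<le> height (ts!i)" using Cons.IH s .
  also have "\<dots> \<le> Max (set (map height ts))"
    using i by (intro Max_ge) auto
  finally show ?case using t i by auto
qed

lemma level_le_height: "w \<in> nodes T \<Longrightarrow> level T w \<le> height T"
  by (auto simp: nodes_def level_def intro: height_subt_le)

definition prefix_free :: "'a list set \<Rightarrow> bool" where
  "prefix_free U \<longleftrightarrow> (\<forall>u\<in>U. \<forall>q. u @ q \<in> U \<longrightarrow> q = [])"

lemma prefix_free_alive:
  assumes "reachable T D A"
  shows "prefix_free A"
  using assms
proof (induction rule: reachable.induct)
  case init
  then show ?case by (simp add: prefix_free_def)
next
  case (step D A w)
  let ?A' = "A - {w} \<union> children T w"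
  have child: "\<exists>i. u = w @ [i]" if "u \<in> children T w" for u
    using that by (auto simp: children_def)
  have "q = []" if u: "u \<in> ?A'" and uq: "u @ q \<in> ?A'" for u q
  proof (cases "u \<in> children T w")
    case True
    then obtain i where ui: "u = w @ [i]" using child by blast
    show ?thesis
    proof (cases "u @ q \<in> children T w")
      case True
      then show ?thesis using ui child by fastforce
    next
      case False
      then have "w @ ([i] @ q) \<in> A" using uq ui by auto
      then have "[i] @ q = []" using step.IH step.hyps(3) unfolding prefix_free_def by blast
      then show ?thesis by simp
    qed
  next
    case False
    then have uA: "u \<in> A" "u \<noteq> w" using u by auto
    show ?thesis
    proof (cases "u @ q \<in> children T w")
      case True
      then obtain j where uj: "u @ q = w @ [j]" using child by blast
      show ?thesis
      proof (cases q rule: rev_cases)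
        case (snoc q' x)
        then have "w = u @ q'" using uj by simp
        then show ?thesis using step.IH uA step.hyps(3) by (simp add: prefix_free_def)
      qed
    next
      case False
      then show ?thesis using uq step.IH uA by (auto simp: prefix_free_def)
    qed
  qed
  then show ?case by (simp add: prefix_free_def)
qed

lemma sum_rank_le_rank_root:
  assumes "finite U" "prefix_free U"
  shows "(\<Sum>u\<in>U. rank T D u) \<le> rank T D []"
proof -
  define S where "S u = {l \<in> leaves T. (\<exists>q. l = u @ q) \<and> l \<notin> D}" for u
  have fin: "finite (S u)" for u
    using finite_leaves by (auto simp: S_def)
  have disj: "S u \<inter> S v = {}" if "u \<in> U" "v \<in> U" "u \<noteq> v" for u v
  proof (rule ccontr)
    assume "S u \<inter> S v \<noteq> {}"
    then obtain q q' where "u @ q = v @ q'" by (auto simp: S_def)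
    then obtain r where "u = v @ r \<or> v = u @ r" by (metis append_eq_append_conv2)
    then show False using assms(2) that by (auto simp: prefix_free_def)
  qed
  have "(\<Sum>u\<in>U. rank T D u) = card (\<Union>u\<in>U. S u)"
    unfolding rank_def S_def[symmetric]
    by (rule card_UN_disjoint[symmetric]) (use assms(1) fin disj in auto)
  also have "\<dots> \<le> card (S [])"
    by (rule card_mono[OF fin]) (auto simp: S_def)
  finally show ?thesis by (simp add: rank_def S_def)
qed

lemma rank_le_card_leaves: "rank T D u \<le> card (leaves T)"
  unfolding rank_def by (rule card_mono[OF finite_leaves]) auto

lemma sum_eta_le_1:
  assumes "reachable T D A"
  shows "(\<Sum>w\<in>nodes T. eta T D A w) \<le> 1"
proof -
  have "(\<Sum>w\<in>nodes T. eta T D A w) = (\<Sum>w\<in>A \<inter> nodes T. real (rank T D w) / real (rank T D []))"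
    by (rule sum.mono_neutral_cong_right) (auto simp: finite_nodes eta_def)
  also have "\<dots> = (\<Sum>w\<in>A \<inter> nodes T. real (rank T D w)) / real (rank T D [])"
    by (simp add: sum_divide_distrib)
  also have "\<dots> \<le> 1"
  proof -
    have "prefix_free (A \<inter> nodes T)"
      using prefix_free_alive[OF assms] by (auto simp: prefix_free_def)
    then have "(\<Sum>w\<in>A \<inter> nodes T. rank T D w) \<le> rank T D []"
      by (intro sum_rank_le_rank_root) (simp_all add: finite_nodes)
    then show ?thesis
      by (auto simp: divide_le_eq_1 simp flip: of_nat_sum)
  qed
  finally show ?thesis .
qed

lemma sum_eta_level_le_height:
  assumes "reachable T D A"
  shows "(\<Sum>w\<in>nodes T. eta T D A w * real (level T w)) \<le> real (height T)"
proof -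
  have "(\<Sum>w\<in>nodes T. eta T D A w * real (level T w)) \<le> (\<Sum>w\<in>nodes T. eta T D A w * real (height T))"
    by (intro sum_mono mult_left_mono) (auto simp: level_le_height eta_def)
  also have "\<dots> = (\<Sum>w\<in>nodes T. eta T D A w) * real (height T)"
    by (simp add: sum_distrib_right)
  also have "\<dots> \<le> real (height T)"
    using sum_eta_le_1[OF assms]
    by (intro mult_left_le_one_le) (auto simp: eta_def intro: sum_nonneg)
  finally show ?thesis .
qed

lemma harm_le_1_plus_ln: "harm n \<le> 1 + ln (real n)"
proof (cases n)
  case (Suc m)
  have "harm (Suc m) - ln (real (Suc m)) \<le> harm (Suc 0) - ln (real (Suc 0))"
    using decseq_harm_diff_ln unfolding decseq_def by blast
  then show ?thesis using Suc by (simp add: harm_def)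
qed (simp add: harm_def)

lemma harm_rank_root_le: "harm (rank T D []) \<le> 1 + ln (real (card (leaves T)))"
proof -
  have "harm (rank T D []) \<le> (harm (card (leaves T)) :: real)"
    by (rule harm_mono[OF rank_le_card_leaves])
  also have "\<dots> \<le> 1 + ln (real (card (leaves T)))"
    by (rule harm_le_1_plus_ln)
  finally show ?thesis .
qed

theorem lemma2:
  "\<exists>C::real. \<forall>T D A. reachable T D A \<longrightarrow>
      Phi T D A \<le> C * real (height T) * (1 + ln (real (card (leaves T))))"
proof (intro exI allI impI)
  fix T D A assume R: "reachable T D A"
  define h where "h = real (height T)"
  define L where "L = 1 + ln (real (card (leaves T)))"
  have "1 \<le> L"
    by (cases "card (leaves T)") (simp_all add: L_def)
  have "Phi T D A \<le> 4 * h * L + h"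
    unfolding Phi_def h_def L_def
    using sum_eta_level_le_height[OF R] harm_rank_root_le[of T D]
    by (intro add_mono mult_left_mono) auto
  also have "\<dots> \<le> 5 * h * L"
    using mult_right_mono[OF \<open>1 \<le> L\<close>, of h] by (simp add: h_def algebra_simps)
  finally show "Phi T D A \<le> 5 * real (height T) * (1 + ln (real (card (leaves T))))"
    by (simp add: h_def L_def)
qed

end
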